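(* Consider the setting and framework in the context with $\alpha_k=\frac{H+1}{H+k}$, and with policies generated by projected gradient descent-ascent: fix $\eta>0$, let $\mu_h^0(\cdot|s)$ and $\nu_h^0(\cdot|s)$ be uniform, and for $k\ge1$, $h\in[H]$, $s\in\mathcal S$, $$\mu_h^k(\cdot|s)=\mathcal P_{\Delta_{\mathcal A}}\Big(\mu_h^{k-1}(\cdot|s)+\eta\sum_b\nu_h^{k-1}(b|s)Q_h^{k-1}(s,\cdot,b)\Big),\quad \nu_h^k(\cdot|s)=\mathcal P_{\Delta_{\mathcal B}}\Big(\nu_h^{k-1}(\cdot|s)-\eta\sum_a\mu_h^{k-1}(a|s)Q_h^{k-1}(s,a,\cdot)\Big),$$ where $\mathcal P$ denotes Euclidean projection (these policies at step $h$, round $k$ are computed before $Q_h^k$). Then for all $k\ge1$ and $h\in[H]$, $$\mathrm{reg}_h^k\le\frac{2}{\eta}\cdot\frac{H+1}{H+k}+\frac{\eta\max\{A,B\}H^2}{2},$$ and, with uniform weights $\beta_k^t=1/k$, $$\overline{\mathrm{reg}}_h^k\le\frac{4}{\eta k}+\frac{\eta(A+B)H^2}{2}.$$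
   Context: Setting. A finite-horizon two-player zero-sum Markov game with finite state set $\mathcal S$, finite action sets $\mathcal A$ (max-player, $A=|\mathcal A|$) and $\mathcal B$ (min-player, $B=|\mathcal B|$), horizon $H\ge 1$, reward functions $r_h:\mathcal S\times\mathcal A\times\mathcal B\to[0,1]$ and transition kernels $\mathbb P_h(\cdot\mid s,a,b)$ on $\mathcal S$, $h\in[H]$. For $Q:\mathcal A\times\mathcal B\to\mathbb R$, $x\in\Delta_{\mathcal A}$, $y\in\Delta_{\mathcal B}$, write $\langle Q,x\times y\rangle=\sum_{a,b}x(a)y(b)Q(a,b)$. Framework. Given learning rates $\alpha_k\in(0,1]$ ($k\ge1$) with $\alpha_1=1$ and Markov policies $\mu_h^k(\cdot\mid s)\in\Delta_{\mathcal A}$, $\nu_h^k(\cdot\mid s)\in\Delta_{\mathcal B}$ ($k\ge1$, $h\in[H]$, $s\in\mathcal S$), define $Q_{H+1}^k\equiv 0$ for all $k$, $Q_h^0\equiv H-h+1$, and for $k\ge1$, $h=H,\dots,1$: $$Q_h^k(s,a,b)=(1-\alpha_k)Q_h^{k-1}(s,a,b)+\alpha_k\Big(r_h(s,a,b)+\sum_{s'}\mathbb P_h(s'\mid s,a,b)\langle Q_{h+1}^k(s',\cdot,\cdot),\mu_{h+1}^k(\cdot\mid s')\times\nu_{h+1}^k(\cdot\mid s')\rangle\Big)$$ (for $h=H$ the inner product term is $0$). Let $\alpha_k^t=\alpha_t\prod_{j=t+1}^k(1-\alpha_j)$ for $1\le t\le k$. Weighted regrets: for $h\in[H]$, $\mathrm{reg}_{h,\mu}^k(s)=\max_{z\in\Delta_{\mathcal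 A}}\sum_{t=1}^k\alpha_k^t\langle Q_h^t(s,\cdot,\cdot),z\times\nu_h^t(\cdot|s)\rangle-\sum_{t=1}^k\alpha_k^t\langle Q_h^t(s,\cdot,\cdot),\mu_h^t(\cdot|s)\times\nu_h^t(\cdot|s)\rangle$, $\mathrm{reg}_{h,\nu}^k(s)=\sum_{t=1}^k\alpha_k^t\langle Q_h^t(s,\cdot,\cdot),\mu_h^t(\cdot|s)\times\nu_h^t(\cdot|s)\rangle-\min_{z\in\Delta_{\mathcal B}}\sum_{t=1}^k\alpha_k^t\langle Q_h^t(s,\cdot,\cdot),\mu_h^t(\cdot|s)\times z\rangle$, $\mathrm{reg}_h^k=\max_{s}\max\{\mathrm{reg}_{h,\mu}^k(s),\mathrm{reg}_{h,\nu}^k(s)\}$. Given weights $\beta_k^t\ge0$ with $\sum_{t=1}^k\beta_k^t=1$, define $\overline{\mathrm{reg}}_{h,\mu}^k(s),\overline{\mathrm{reg}}_{h,\nu}^k(s)$ exactly as $\mathrm{reg}_{h,\mu}^k(s),\mathrm{reg}_{h,\nu}^k(s)$ but with $\alpha_k^t$ replaced by $\beta_k^t$, and $\overline{\mathrm{reg}}_h^k=\max_s\big(\overline{\mathrm{reg}}_{h,\mu}^k(s)+\overline{\mathrm{reg}}_{h,\nu}^k(s)\big)$. *)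

theory Defs
  imports Complex_Main
begin

definition simplex :: "('a::finite \<Rightarrow> real) set" where
  "simplex = {x. (\<forall>a. 0 \<le> x a) \<and> (\<Sum>a\<in>UNIV. x a) = 1}"

definition proj_simplex :: "('a::finite \<Rightarrow> real) \<Rightarrow> ('a \<Rightarrow> real)" where
  "proj_simplex v = (THE x. x \<in> simplex \<and>
      (\<forall>z\<in>simplex. (\<Sum>a\<in>UNIV. (x a - v a)^2) \<le> (\<Sum>a\<in>UNIV. (z a - v a)^2)))"

definition ip :: "('a::finite \<Rightarrow> 'b::finite \<Rightarrow> real) \<Rightarrow> ('a \<Rightarrow> real) \<Rightarrow> ('b \<Rightarrow> real) \<Rightarrow> real" where
  "ip Q x y = (\<Sum>a\<in>UNIV. \<Sum>b\<in>UNIV. x a * y b * Q a b)"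

definition lr :: "nat \<Rightarrow> nat \<Rightarrow> real" where
  "lr H k = (real H + 1) / (real H + real k)"

definition lrw :: "nat \<Rightarrow> nat \<Rightarrow> nat \<Rightarrow> real" where
  "lrw H k t = lr H t * (\<Prod>j\<in>{t+1..k}. (1 - lr H j))"

text \<open>Weighted regrets with weights w t (t = 1..k).
  Q t h s a b = Q_h^t(s,a,b), mu t h s = mu_h^t(.|s), nu t h s = nu_h^t(.|s).\<close>
definition reg_mu ::
  "(nat \<Rightarrow> real) \<Rightarrow> (nat \<Rightarrow> nat \<Rightarrow> 's \<Rightarrow> 'a::finite \<Rightarrow> 'b::finite \<Rightarrow> real)
   \<Rightarrow> (nat \<Rightarrow> nat \<Rightarrow> 's \<Rightarrow> 'a \<Rightarrow> real) \<Rightarrow> (nat \<Rightarrow> nat \<Rightarrow> 's \<Rightarrow> 'b \<Rightarrow> real)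
   \<Rightarrow> nat \<Rightarrow> nat \<Rightarrow> 's \<Rightarrow> real" where
  "reg_mu w Q mu nu k h s =
     (SUP z\<in>simplex. (\<Sum>t=1..k. w t * ip (Q t h s) z (nu t h s)))
     - (\<Sum>t=1..k. w t * ip (Q t h s) (mu t h s) (nu t h s))"

definition reg_nu ::
  "(nat \<Rightarrow> real) \<Rightarrow> (nat \<Rightarrow> nat \<Rightarrow> 's \<Rightarrow> 'a::finite \<Rightarrow> 'b::finite \<Rightarrow> real)
   \<Rightarrow> (nat \<Rightarrow> nat \<Rightarrow> 's \<Rightarrow> 'a \<Rightarrow> real) \<Rightarrow> (nat \<Rightarrow> nat \<Rightarrow> 's \<Rightarrow> 'b \<Rightarrow> real)
   \<Rightarrow> nat \<Rightarrow> nat \<Rightarrow> 's \<Rightarrow> real" where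
  "reg_nu w Q mu nu k h s =
     (\<Sum>t=1..k. w t * ip (Q t h s) (mu t h s) (nu t h s))
     - (INF z\<in>simplex. (\<Sum>t=1..k. w t * ip (Q t h s) (mu t h s) z))"

definition reg ::
  "nat \<Rightarrow> (nat \<Rightarrow> nat \<Rightarrow> 's::finite \<Rightarrow> 'a::finite \<Rightarrow> 'b::finite \<Rightarrow> real)
   \<Rightarrow> (nat \<Rightarrow> nat \<Rightarrow> 's \<Rightarrow> 'a \<Rightarrow> real) \<Rightarrow> (nat \<Rightarrow> nat \<Rightarrow> 's \<Rightarrow> 'b \<Rightarrow> real)
   \<Rightarrow> nat \<Rightarrow> nat \<Rightarrow> real" where
  "reg H Q mu nu k h = (MAX s\<in>UNIV. max (reg_mu (lrw H k) Q mu nu k h s)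
                                      (reg_nu (lrw H k) Q mu nu k h s))"

definition reg_bar ::
  "(nat \<Rightarrow> real) \<Rightarrow> (nat \<Rightarrow> nat \<Rightarrow> 's::finite \<Rightarrow> 'a::finite \<Rightarrow> 'b::finite \<Rightarrow> real)
   \<Rightarrow> (nat \<Rightarrow> nat \<Rightarrow> 's \<Rightarrow> 'a \<Rightarrow> real) \<Rightarrow> (nat \<Rightarrow> nat \<Rightarrow> 's \<Rightarrow> 'b \<Rightarrow> real)
   \<Rightarrow> nat \<Rightarrow> nat \<Rightarrow> real" where
  "reg_bar w Q mu nu k h = (MAX s\<in>UNIV. reg_mu w Q mu nu k h s + reg_nu w Q mu nu k h s)"

end

theory Submission
  imports Defs "HOL-Analysis.Function_Topology"
begin

text \<open>
  The value functions stay in [0, H]: Q_h^k is a convex combination of Q_h^(k-1) and the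
  backup r_h + P_h V_(h+1), which lies in [0, H - h + 1] by backward induction on h.
  Hence, at every state, each player runs projected online gradient ascent on the simplex
  with gradients of squared Euclidean norm at most A H^2 (resp. B H^2). The standard
  analysis of projected gradient steps, with weights that are nondecreasing in t, turns the
  telescoping sum of squared distances to a comparator into at most w_k times the squared
  diameter 2 of the simplex, giving weighted regret at most w_k / eta + eta A H^2 / 2.
  Both alpha_k^t and 1/k are nondecreasing in t and sum to 1, with last weights alpha_k and 1/k.
\<close>

definition sqdist :: "('a::finite \<Rightarrow> real) \<Rightarrow> ('a \<Rightarrow> real) \<Rightarrow> real" where
  "sqdist x y = (\<Sum>a\<in>UNIV. (x a - y a)^2)"

lemma sqdist_nonneg: "0 \<le> sqdist x y"
  unfolding sqdist_def by (intro sum_nonneg) auto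

lemma sqdist_commute: "sqdist x y = sqdist y x"
  unfolding sqdist_def by (simp add: power2_commute)

lemma sqdist_expand:
  "sqdist x v = sqdist p v + 2 * (\<Sum>a\<in>UNIV. (p a - v a) * (x a - p a)) + sqdist x p"
proof -
  have "sqdist x v = (\<Sum>a\<in>UNIV. (p a - v a)^2 + 2 * ((p a - v a) * (x a - p a)) + (x a - p a)^2)"
    unfolding sqdist_def by (rule sum.cong) (simp_all add: power2_eq_square algebra_simps)
  then show ?thesis
    by (simp add: sqdist_def sum.distrib sum_distrib_left)
qed

lemma simplex_le_1:
  assumes "x \<in> simplex" shows "x a \<le> 1"
proof -
  have "x a \<le> (\<Sum>b\<in>UNIV. x b)"
    using assms by (intro member_le_sum) (auto simp: simplex_def)
  then show ?thesis using assms by (simp add: simplex_def)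
qed

lemma uniform_in_simplex: "(\<lambda>_. 1 / real (card (UNIV :: 'a set))) \<in> (simplex :: ('a::finite \<Rightarrow> real) set)"
  by (simp add: simplex_def)

lemma simplex_compact: "compact (simplex :: ('a::finite \<Rightarrow> real) set)"
proof -
  have cube: "compact (PiE (UNIV::'a set) (\<lambda>_. {0..1::real}))"
    using compactin_PiE[of "\<lambda>_. euclidean" "UNIV::'a set" "\<lambda>_. {0..1::real}"]
    by (simp add: euclidean_product_topology)
  have "simplex = (\<Inter>a. {x::'a\<Rightarrow>real. 0 \<le> x a}) \<inter> {x. (\<Sum>a\<in>UNIV. x a) = 1}"
    by (auto simp: simplex_def)
  moreover have "closed {x::'a\<Rightarrow>real. 0 \<le> x a}" for a
    by (intro closed_Collect_le continuous_intros) (auto intro: continuous_on_product_coordinates)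
  moreover have "closed {x::'a\<Rightarrow>real. (\<Sum>a\<in>UNIV. x a) = 1}"
    by (intro closed_Collect_eq continuous_intros) (auto intro: continuous_on_product_coordinates)
  ultimately have closed: "closed (simplex :: ('a \<Rightarrow> real) set)"
    by (metis closed_INT closed_Int)
  have "simplex \<subseteq> PiE (UNIV::'a set) (\<lambda>_. {0..1::real})"
    by (auto simp: simplex_def simplex_le_1)
  then show ?thesis
    using compact_Int_closed[OF cube closed] by (simp add: Int_absorb1)
qed

lemma simplex_segment:
  assumes "p \<in> simplex" "z \<in> simplex" "0 \<le> l" "l \<le> 1"
  shows "(\<lambda>a. p a + l * (z a - p a)) \<in> (simplex :: ('a::finite \<Rightarrow> real) set)"
proof -
  have "0 \<le> (1 - l) * p a + l * z a" for a
    using assms by (auto simp: simplex_def)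
  moreover have "(\<Sum>a\<in>UNIV. p a + l * (z a - p a)) = (\<Sum>a\<in>UNIV. p a) + l * ((\<Sum>a\<in>UNIV. z a) - (\<Sum>a\<in>UNIV. p a))"
    by (simp add: sum.distrib sum_distrib_left[symmetric] sum_subtractf)
  ultimately show ?thesis
    using assms by (simp add: simplex_def algebra_simps)
qed

lemma simplex_sqdist_le_2:
  assumes "x \<in> simplex" "z \<in> simplex"
  shows "sqdist x z \<le> 2"
proof -
  have "sqdist x z \<le> (\<Sum>a\<in>UNIV. x a + z a)"
    unfolding sqdist_def
  proof (rule sum_mono)
    fix a
    have "0 \<le> x a" "x a \<le> 1" "0 \<le> z a" "z a \<le> 1"
      using assms simplex_le_1 by (auto simp: simplex_def)
    then have "x a * x a \<le> x a" "z a * z a \<le> z a" "0 \<le> x a * z a"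
      by (auto simp: mult_left_le)
    then show "(x a - z a)^2 \<le> x a + z a" by (simp add: power2_eq_square algebra_simps)
  qed
  also have "\<dots> = 2" using assms by (simp add: sum.distrib simplex_def)
  finally show ?thesis .
qed

lemma simplex_average_bounds:
  assumes "y \<in> simplex" "\<And>b. lo \<le> f b \<and> f b \<le> hi"
  shows "lo \<le> (\<Sum>b\<in>UNIV. y b * f b) \<and> (\<Sum>b\<in>UNIV. y b * f b) \<le> hi"
proof -
  have y: "\<And>b. 0 \<le> y b" "(\<Sum>b\<in>UNIV. y b) = 1" using assms(1) by (auto simp: simplex_def)
  have "(\<Sum>b\<in>UNIV. y b * lo) \<le> (\<Sum>b\<in>UNIV. y b * f b)" "(\<Sum>b\<in>UNIV. y b * f b) \<le> (\<Sum>b\<in>UNIV. y b * hi)"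
    using y assms(2) by (auto intro!: sum_mono mult_left_mono)
  then show ?thesis
    using y by (simp add: sum_distrib_right[symmetric])
qed

section \<open>Euclidean projection onto the simplex\<close>

lemma nonneg_by_small_quadratic:
  fixes c d :: real
  assumes "\<And>l. 0 < l \<Longrightarrow> l \<le> 1 \<Longrightarrow> 0 \<le> 2 * l * c + l^2 * d"
  shows "0 \<le> c"
proof (rule ccontr)
  assume "\<not> 0 \<le> c"
  define l where "l = min 1 (- c / (\<bar>d\<bar> + 1))"
  have pos: "0 < \<bar>d\<bar> + 1" by simp
  then have "0 < - c / (\<bar>d\<bar> + 1)"
    using \<open>\<not> 0 \<le> c\<close> by (simp add: divide_neg_pos)
  then have l: "0 < l" "l \<le> 1"
    by (auto simp: l_def)
  have "l \<le> - c / (\<bar>d\<bar> + 1)"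
    by (simp add: l_def)
  then have "l * (\<bar>d\<bar> + 1) \<le> - c"
    using pos_le_divide_eq[OF pos] by blast
  then have "l * \<bar>d\<bar> + l \<le> - c"
    by (simp add: distrib_left)
  moreover have "l * d \<le> l * \<bar>d\<bar>"
    by (rule mult_left_mono) (use l in auto)
  ultimately have "2 * c + l * d < 0"
    using l \<open>\<not> 0 \<le> c\<close> by linarith
  then have "l * (2 * c + l * d) < 0"
    using l by (simp add: mult_pos_neg)
  with assms[OF l(1,2)] show False
    by (simp add: power2_eq_square algebra_simps)
qed

lemma simplex_minimizer_variational_ineq:
  assumes p: "p \<in> simplex" and p_min: "\<And>z. z \<in> simplex \<Longrightarrow> sqdist p v \<le> sqdist z v"
    and z: "z \<in> simplex"
  shows "0 \<le> (\<Sum>a\<in>UNIV. (p a - v a) * (z a - p a))"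
proof (rule nonneg_by_small_quadratic)
  fix l :: real assume "0 < l" "l \<le> 1"
  define x where "x = (\<lambda>a. p a + l * (z a - p a))"
  have "x \<in> simplex"
    unfolding x_def using simplex_segment[OF p z] \<open>0 < l\<close> \<open>l \<le> 1\<close> by simp
  moreover have "sqdist x p = l^2 * sqdist z p"
    unfolding x_def sqdist_def by (simp add: sum_distrib_left power_mult_distrib)
  moreover have "(\<Sum>a\<in>UNIV. (p a - v a) * (x a - p a)) = l * (\<Sum>a\<in>UNIV. (p a - v a) * (z a - p a))"
    unfolding x_def by (simp add: sum_distrib_left mult_ac)
  ultimately have "sqdist x v = sqdist p v + 2 * l * (\<Sum>a\<in>UNIV. (p a - v a) * (z a - p a)) + l^2 * sqdist z p"
    using sqdist_expand[of x v p] by simp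
  then show "0 \<le> 2 * l * (\<Sum>a\<in>UNIV. (p a - v a) * (z a - p a)) + l^2 * sqdist z p"
    using p_min[OF \<open>x \<in> simplex\<close>] by simp
qed

lemma simplex_minimizer_pythagoras:
  assumes "p \<in> simplex" "\<And>z. z \<in> simplex \<Longrightarrow> sqdist p v \<le> sqdist z v" "z \<in> simplex"
  shows "sqdist p v + sqdist z p \<le> sqdist z v"
  using sqdist_expand[of z v p] simplex_minimizer_variational_ineq[OF assms] by linarith

lemma proj_simplex_minimizer:
  "proj_simplex v \<in> simplex \<and> (\<forall>z\<in>simplex. sqdist (proj_simplex v) v \<le> sqdist z v)"
proof -
  have cont: "continuous_on simplex (\<lambda>x. sqdist x v)"
    unfolding sqdist_def
    by (intro continuous_intros continuous_on_subset[OF continuous_on_product_coordinates subset_UNIV])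
  have nonempty: "simplex \<noteq> {}"
    using uniform_in_simplex by blast
  obtain p where p: "p \<in> simplex" and p_min: "\<forall>z\<in>simplex. sqdist p v \<le> sqdist z v"
    using continuous_attains_inf[OF simplex_compact nonempty cont] by blast
  have unique: "q = p" if "q \<in> simplex" "\<forall>z\<in>simplex. sqdist q v \<le> sqdist z v" for q
  proof -
    have "sqdist p v + sqdist q p \<le> sqdist q v"
      by (rule simplex_minimizer_pythagoras[OF p _ that(1)]) (use p_min in blast)
    moreover have "sqdist q v \<le> sqdist p v"
      using that(2) p by blast
    ultimately have "sqdist q p = 0"
      using sqdist_nonneg[of q p] sqdist_nonneg[of p v] by linarith
    then have "\<forall>a\<in>UNIV. (q a - p a)^2 = 0"
      unfolding sqdist_def by (subst sum_nonneg_eq_0_iff[symmetric]) auto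
    then show "q = p"
      by auto
  qed
  have "proj_simplex v = (THE x. x \<in> simplex \<and> (\<forall>z\<in>simplex. sqdist x v \<le> sqdist z v))"
    unfolding proj_simplex_def sqdist_def ..
  also have "\<dots> = p"
    using p p_min unique by (intro the_equality) blast+
  finally show ?thesis using p p_min by simp
qed

lemma proj_simplex_in_simplex: "proj_simplex v \<in> simplex"
  using proj_simplex_minimizer by blast

lemma proj_simplex_nonexpansive:
  assumes "z \<in> simplex" shows "sqdist (proj_simplex v) z \<le> sqdist v z"
proof -
  have "sqdist (proj_simplex v) v + sqdist z (proj_simplex v) \<le> sqdist z v"
    using proj_simplex_minimizer assms by (intro simplex_minimizer_pythagoras) auto
  then show ?thesis
    using sqdist_nonneg[of "proj_simplex v" v] sqdist_commute[of z "proj_simplex v"]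
      sqdist_commute[of z v] by linarith
qed

section \<open>Projected gradient ascent with nondecreasing weights\<close>

lemma proj_gradient_step:
  assumes z: "z \<in> simplex" and eta: "0 < \<eta>" and grad: "(\<Sum>a\<in>UNIV. (g a)^2) \<le> G"
  shows "(\<Sum>a\<in>UNIV. g a * (z a - x a))
    \<le> (sqdist x z - sqdist (proj_simplex (\<lambda>a. x a + \<eta> * g a)) z) / (2 * \<eta>) + \<eta> * G / 2"
proof -
  have "sqdist (\<lambda>a. x a + \<eta> * g a) z
      = (\<Sum>a\<in>UNIV. (x a - z a)^2 - 2 * \<eta> * (g a * (z a - x a)) + \<eta>^2 * (g a)^2)"
    unfolding sqdist_def by (rule sum.cong) (simp_all add: power2_eq_square algebra_simps)
  also have "\<dots> = sqdist x z - 2 * \<eta> * (\<Sum>a\<in>UNIV. g a * (z a - x a)) + \<eta>^2 * (\<Sum>a\<in>UNIV. (g a)^2)"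
    by (simp add: sqdist_def sum.distrib sum_subtractf sum_distrib_left)
  moreover have "\<eta>^2 * (\<Sum>a\<in>UNIV. (g a)^2) \<le> \<eta>^2 * G"
    using grad by (simp add: mult_left_mono)
  ultimately have "2 * \<eta> * (\<Sum>a\<in>UNIV. g a * (z a - x a))
      \<le> sqdist x z - sqdist (proj_simplex (\<lambda>a. x a + \<eta> * g a)) z + \<eta>^2 * G"
    using proj_simplex_nonexpansive[OF z, of "\<lambda>a. x a + \<eta> * g a"] by linarith
  then show ?thesis
    using eta by (simp add: field_simps power2_eq_square)
qed

lemma weighted_telescope_le:
  fixes w D :: "nat \<Rightarrow> real"
  assumes "1 \<le> k" "\<And>t. t \<in> {1..k} \<Longrightarrow> 0 \<le> w t" "mono_on {1..k} w"
    "\<And>t. t \<in> {1..Suc k} \<Longrightarrow> 0 \<le> D t \<and> D t \<le> C"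
  shows "(\<Sum>t=1..k. w t * (D t - D (Suc t))) \<le> w k * C - w k * D (Suc k)"
  using assms
proof (induction k rule: dec_induct)
  case base
  then have "w 1 * D 1 \<le> w 1 * C"
    by (intro mult_left_mono) auto
  then show ?case by (simp add: algebra_simps)
next
  case (step n)
  have "mono_on {1..n} w"
    using step.prems(2) by (rule mono_on_subset) auto
  then have IH: "(\<Sum>t=1..n. w t * (D t - D (Suc t))) \<le> w n * C - w n * D (Suc n)"
    using step by simp
  have "(w (Suc n) - w n) * D (Suc n) \<le> (w (Suc n) - w n) * C"
    using step mono_onD[OF step.prems(2), of n "Suc n"] by (intro mult_left_mono) auto
  moreover have "(\<Sum>t=1..Suc n. w t * (D t - D (Suc t)))
      = (\<Sum>t=1..n. w t * (D t - D (Suc t))) + w (Suc n) * (D (Suc n) - D (Suc (Suc n)))"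
    using step.hyps by (simp add: sum.nat_ivl_Suc')
  ultimately show ?case
    using IH unfolding left_diff_distrib right_diff_distrib by linarith
qed

definition nondecreasing_prob_weights :: "(nat \<Rightarrow> real) \<Rightarrow> nat \<Rightarrow> bool" where
  "nondecreasing_prob_weights w k \<longleftrightarrow>
     (\<forall>t\<in>{1..k}. 0 \<le> w t) \<and> mono_on {1..k} w \<and> (\<Sum>t=1..k. w t) = 1"

lemma projected_gradient_regret:
  fixes x g :: "nat \<Rightarrow> 'a::finite \<Rightarrow> real"
  assumes eta: "0 < \<eta>" and w: "nondecreasing_prob_weights w k" and k: "1 \<le> k"
    and x1: "x 1 \<in> simplex"
    and step: "\<And>t. t \<in> {1..k} \<Longrightarrow> x (Suc t) = proj_simplex (\<lambda>a. x t a + \<eta> * g t a)"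
    and grad: "\<And>t. t \<in> {1..k} \<Longrightarrow> (\<Sum>a\<in>UNIV. (g t a)^2) \<le> G"
    and z: "z \<in> simplex"
  shows "(\<Sum>t=1..k. w t * (\<Sum>a\<in>UNIV. g t a * (z a - x t a))) \<le> w k / \<eta> + \<eta> * G / 2"
proof -
  have w_nonneg: "\<And>t. t \<in> {1..k} \<Longrightarrow> 0 \<le> w t" and w_mono: "mono_on {1..k} w"
    and w_sum: "(\<Sum>t=1..k. w t) = 1"
    using w by (auto simp: nondecreasing_prob_weights_def)
  define D where "D t = sqdist (x t) z" for t
  have x_in: "x t \<in> simplex" if "t \<in> {1..Suc k}" for t
  proof (cases "t = 1")
    case False
    then have "t - 1 \<in> {1..k}" "t = Suc (t - 1)"
      using that by auto
    then show ?thesis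
      using step proj_simplex_in_simplex by metis
  qed (use x1 in simp)
  then have D_bounds: "0 \<le> D t \<and> D t \<le> 2" if "t \<in> {1..Suc k}" for t
    unfolding D_def using simplex_sqdist_le_2[OF x_in[OF that] z] sqdist_nonneg by blast
  have "w t * (\<Sum>a\<in>UNIV. g t a * (z a - x t a)) \<le> w t * ((D t - D (Suc t)) / (2 * \<eta>) + \<eta> * G / 2)"
    if t: "t \<in> {1..k}" for t
    using proj_gradient_step[OF z eta grad[OF t], of "x t"] step[OF t] w_nonneg[OF t]
    unfolding D_def by (intro mult_left_mono) auto
  then have "w t * (\<Sum>a\<in>UNIV. g t a * (z a - x t a)) \<le> w t * (D t - D (Suc t)) / (2 * \<eta>) + \<eta> * G / 2 * w t"
    if "t \<in> {1..k}" for t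
    using that by (simp add: distrib_left mult.commute)
  then have "(\<Sum>t=1..k. w t * (\<Sum>a\<in>UNIV. g t a * (z a - x t a)))
        \<le> (\<Sum>t=1..k. w t * (D t - D (Suc t)) / (2 * \<eta>) + \<eta> * G / 2 * w t)"
    by (intro sum_mono) auto
  also have "\<dots> = (\<Sum>t=1..k. w t * (D t - D (Suc t))) / (2 * \<eta>) + \<eta> * G / 2 * (\<Sum>t=1..k. w t)"
    by (simp add: sum.distrib sum_divide_distrib sum_distrib_left)
  also have "\<dots> = (\<Sum>t=1..k. w t * (D t - D (Suc t))) / (2 * \<eta>) + \<eta> * G / 2"
    using w_sum by simp
  also have "\<dots> \<le> w k * 2 / (2 * \<eta>) + \<eta> * G / 2"
  proof -
    have "(\<Sum>t=1..k. w t * (D t - D (Suc t))) \<le> w k * 2 - w k * D (Suc k)"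
      by (rule weighted_telescope_le[OF k _ w_mono]) (use w_nonneg D_bounds in auto)
    moreover have "0 \<le> w k * D (Suc k)"
      using w_nonneg[of k] D_bounds[of "Suc k"] k by simp
    ultimately have "(\<Sum>t=1..k. w t * (D t - D (Suc t))) \<le> w k * 2"
      by linarith
    then have "(\<Sum>t=1..k. w t * (D t - D (Suc t))) / (2 * \<eta>) \<le> w k * 2 / (2 * \<eta>)"
      by (rule divide_right_mono) (use eta in simp)
    then show ?thesis
      by simp
  qed
  finally show ?thesis by simp
qed

section \<open>The learning-rate weights\<close>

lemma lr_pos: "1 \<le> H \<Longrightarrow> 0 < lr H k"
  by (simp add: lr_def)

lemma lr_le_1: "1 \<le> k \<Longrightarrow> lr H k \<le> 1"
  by (simp add: lr_def)

lemma lrw_nonneg: "1 \<le> H \<Longrightarrow> 0 \<le> lrw H k t"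
  unfolding lrw_def by (intro mult_nonneg_nonneg prod_nonneg) (auto simp: lr_pos less_imp_le lr_le_1)

lemma lr_mult_one_minus_lr_Suc_le:
  assumes "1 \<le> H" shows "lr H t * (1 - lr H (Suc t)) \<le> lr H (Suc t)"
proof -
  have pos: "0 < real H + real t" using assms by simp
  have "lr H t * (1 - lr H (Suc t)) = lr H (Suc t) * (real t / (real H + real t))"
    using pos by (simp add: lr_def field_simps)
  also have "\<dots> \<le> lr H (Suc t)"
    using pos by (intro mult_left_le) (auto simp: lr_def)
  finally show ?thesis .
qed

lemma lrw_le_lrw_Suc:
  assumes "1 \<le> H" "t < k"
  shows "lrw H k t \<le> lrw H k (Suc t)"
proof -
  have "lrw H k t = lr H t * (1 - lr H (Suc t)) * (\<Prod>j\<in>{Suc (Suc t)..k}. 1 - lr H j)"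
    using assms(2) by (simp add: lrw_def prod.atLeast_Suc_atMost mult.assoc)
  also have "\<dots> \<le> lr H (Suc t) * (\<Prod>j\<in>{Suc (Suc t)..k}. 1 - lr H j)"
    using lr_mult_one_minus_lr_Suc_le[OF assms(1)]
    by (intro mult_right_mono prod_nonneg) (auto simp: lr_le_1)
  also have "\<dots> = lrw H k (Suc t)"
    by (simp add: lrw_def)
  finally show ?thesis .
qed

lemma lrw_sum:
  assumes "1 \<le> k" shows "(\<Sum>t=1..k. lrw H k t) = 1"
  using assms
proof (induction k rule: dec_induct)
  case base
  then show ?case by (simp add: lrw_def lr_def)
next
  case (step n)
  have "(\<Sum>t=1..n. lrw H (Suc n) t) = (\<Sum>t=1..n. lrw H n t) * (1 - lr H (Suc n))"
    unfolding sum_distrib_right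
    by (rule sum.cong) (auto simp: lrw_def prod.nat_ivl_Suc' mult_ac)
  then show ?case
    using step by (simp add: sum.nat_ivl_Suc' lrw_def)
qed

lemma nondecreasing_prob_weights_lrw:
  assumes "1 \<le> H" "1 \<le> k"
  shows "nondecreasing_prob_weights (lrw H k) k"
proof -
  have "mono_on {1..k} (lrw H k)"
    by (rule mono_onI, rule lift_Suc_mono_le_ivl[of "{..<k}"]) (auto intro: lrw_le_lrw_Suc[OF assms(1)])
  then show ?thesis
    using assms lrw_nonneg lrw_sum by (simp add: nondecreasing_prob_weights_def)
qed

lemma nondecreasing_prob_weights_uniform:
  "1 \<le> k \<Longrightarrow> nondecreasing_prob_weights (\<lambda>_. 1 / real k) k"
  by (simp add: nondecreasing_prob_weights_def mono_on_def)

lemma ip_eq_sum_left: "ip M x y = (\<Sum>a\<in>UNIV. x a * (\<Sum>b\<in>UNIV. y b * M a b))"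
  unfolding ip_def by (simp add: sum_distrib_left mult.assoc mult.left_commute)

lemma ip_eq_sum_right: "ip M x y = (\<Sum>b\<in>UNIV. y b * (\<Sum>a\<in>UNIV. x a * M a b))"
  unfolding ip_def by (subst sum.swap) (simp add: sum_distrib_left mult.assoc mult.left_commute)

lemma ip_bounds:
  assumes "x \<in> simplex" "y \<in> simplex" "\<And>a b. lo \<le> M a b \<and> M a b \<le> hi"
  shows "lo \<le> ip M x y \<and> ip M x y \<le> hi"
  unfolding ip_eq_sum_left
  by (rule simplex_average_bounds[OF assms(1)]) (rule simplex_average_bounds[OF assms(2)], use assms(3) in auto)

lemma ip_diff_left:
  "ip M z y - ip M x y = (\<Sum>a\<in>UNIV. (\<Sum>b\<in>UNIV. y b * M a b) * (z a - x a))"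
  unfolding ip_eq_sum_left by (simp add: sum_subtractf[symmetric] algebra_simps)

lemma ip_diff_right:
  "ip M x y - ip M x z = (\<Sum>b\<in>UNIV. - (\<Sum>a\<in>UNIV. x a * M a b) * (z b - y b))"
  unfolding ip_eq_sum_right by (simp add: sum_subtractf[symmetric] algebra_simps)

lemma sum_square_average_le:
  fixes M :: "'a::finite \<Rightarrow> 'b::finite \<Rightarrow> real"
  assumes "y \<in> simplex" "\<And>a b. \<bar>M a b\<bar> \<le> C"
  shows "(\<Sum>a\<in>UNIV. (\<Sum>b\<in>UNIV. y b * M a b)^2) \<le> real (card (UNIV :: 'a set)) * C^2"
proof -
  have C: "0 \<le> C"
    using abs_ge_zero[of "M undefined undefined"] assms(2) by (rule order_trans)
  have "- C \<le> (\<Sum>b\<in>UNIV. y b * M a b) \<and> (\<Sum>b\<in>UNIV. y b * M a b) \<le> C" for a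
    by (rule simplex_average_bounds[OF assms(1)]) (meson abs_le_iff assms(2) minus_le_iff)
  then have "(\<Sum>b\<in>UNIV. y b * M a b)^2 \<le> C^2" for a
    unfolding power2_le_iff_abs_le[OF C] abs_le_iff by (meson minus_le_iff)
  then show ?thesis
    by (intro sum_bounded_above) auto
qed

section \<open>Gradient descent-ascent in the Markov game\<close>

locale gda_markov_game =
  fixes H :: nat and \<eta> :: real
    and r :: "nat \<Rightarrow> 's::finite \<Rightarrow> 'a::finite \<Rightarrow> 'b::finite \<Rightarrow> real"
    and P :: "nat \<Rightarrow> 's \<Rightarrow> 'a \<Rightarrow> 'b \<Rightarrow> 's \<Rightarrow> real"
    and Q :: "nat \<Rightarrow> nat \<Rightarrow> 's \<Rightarrow> 'a \<Rightarrow> 'b \<Rightarrow> real"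
    and mu :: "nat \<Rightarrow> nat \<Rightarrow> 's \<Rightarrow> 'a \<Rightarrow> real"
    and nu :: "nat \<Rightarrow> nat \<Rightarrow> 's \<Rightarrow> 'b \<Rightarrow> real"
  assumes H: "H \<ge> 1"
    and eta: "\<eta> > 0"
    and r_range: "\<And>h s a b. h \<in> {1..H} \<Longrightarrow> 0 \<le> r h s a b \<and> r h s a b \<le> 1"
    and P_nonneg: "\<And>h s a b s'. h \<in> {1..H} \<Longrightarrow> 0 \<le> P h s a b s'"
    and P_sum: "\<And>h s a b. h \<in> {1..H} \<Longrightarrow> (\<Sum>s'\<in>UNIV. P h s a b s') = 1"
    and Q_last: "\<And>k s a b. Q k (H+1) s a b = 0"
    and Q_init: "\<And>h s a b. h \<in> {1..H} \<Longrightarrow> Q 0 h s a b = real H - real h + 1"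
    and Q_step: "\<And>k h s a b. k \<ge> 1 \<Longrightarrow> h \<in> {1..H} \<Longrightarrow>
        Q k h s a b = (1 - lr H k) * Q (k-1) h s a b
          + lr H k * (r h s a b + (\<Sum>s'\<in>UNIV. P h s a b s' *
                 ip (Q k (h+1) s') (mu k (h+1) s') (nu k (h+1) s')))"
    and mu_init: "\<And>h s a. h \<in> {1..H} \<Longrightarrow> mu 0 h s a = 1 / real (card (UNIV :: 'a set))"
    and nu_init: "\<And>h s b. h \<in> {1..H} \<Longrightarrow> nu 0 h s b = 1 / real (card (UNIV :: 'b set))"
    and mu_step: "\<And>k h s. k \<ge> 1 \<Longrightarrow> h \<in> {1..H} \<Longrightarrow>
        mu k h s = proj_simplex (\<lambda>a. mu (k-1) h s a
                     + \<eta> * (\<Sum>b\<in>UNIV. nu (k-1) h s b * Q (k-1) h s a b))"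
    and nu_step: "\<And>k h s. k \<ge> 1 \<Longrightarrow> h \<in> {1..H} \<Longrightarrow>
        nu k h s = proj_simplex (\<lambda>b. nu (k-1) h s b
                     - \<eta> * (\<Sum>a\<in>UNIV. mu (k-1) h s a * Q (k-1) h s a b))"
begin

lemma mu_in_simplex:
  assumes "h \<in> {1..H}" shows "mu k h s \<in> simplex"
proof (cases k)
  case 0
  then have "mu k h s = (\<lambda>_. 1 / real (card (UNIV :: 'a set)))"
    using mu_init[OF assms] by (simp add: fun_eq_iff)
  then show ?thesis
    using uniform_in_simplex by simp
qed (use assms mu_step proj_simplex_in_simplex in simp)

lemma nu_in_simplex:
  assumes "h \<in> {1..H}" shows "nu k h s \<in> simplex"
proof (cases k)
  case 0
  then have "nu k h s = (\<lambda>_. 1 / real (card (UNIV :: 'b set)))"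
    using nu_init[OF assms] by (simp add: fun_eq_iff)
  then show ?thesis
    using uniform_in_simplex by simp
qed (use assms nu_step proj_simplex_in_simplex in simp)

lemma Q_Suc_H: "Q k (Suc H) s a b = 0"
  using Q_last by simp

lemma P_in_simplex: "h \<in> {1..H} \<Longrightarrow> P h s a b \<in> simplex"
  using P_nonneg P_sum by (simp add: simplex_def)

lemma Q_step_range:
  assumes h: "h \<in> {1..H}" and k: "1 \<le> k"
    and prev: "\<And>s a b. 0 \<le> Q (k-1) h s a b \<and> Q (k-1) h s a b \<le> real H - real h + 1"
    and succ: "\<And>s a b. 0 \<le> Q k (h+1) s a b \<and> Q k (h+1) s a b \<le> real H - real h"
  shows "0 \<le> Q k h s a b \<and> Q k h s a b \<le> real H - real h + 1"
proof -
  define V where "V s' = ip (Q k (h+1) s') (mu k (h+1) s') (nu k (h+1) s')" for s'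
  have "0 \<le> V s' \<and> V s' \<le> real H - real h" for s'
  proof (cases "h = H")
    case True
    then show ?thesis by (simp add: V_def ip_def Q_Suc_H)
  next
    case False
    then have "h + 1 \<in> {1..H}" using h by simp
    then show ?thesis
      unfolding V_def by (intro ip_bounds mu_in_simplex nu_in_simplex succ)
  qed
  then have "0 \<le> (\<Sum>s'\<in>UNIV. P h s a b s' * V s') \<and> (\<Sum>s'\<in>UNIV. P h s a b s' * V s') \<le> real H - real h"
    by (intro simplex_average_bounds P_in_simplex h)
  then have backup: "0 \<le> r h s a b + (\<Sum>s'\<in>UNIV. P h s a b s' * V s')"
      "r h s a b + (\<Sum>s'\<in>UNIV. P h s a b s' * V s') \<le> real H - real h + 1"
    using r_range[OF h, of s a b] by auto
  have "0 \<le> 1 - lr H k" "0 \<le> lr H k"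
    using lr_le_1[OF k] lr_pos[OF H] by (auto simp: less_imp_le)
  moreover have "Q k h s a b = (1 - lr H k) * Q (k-1) h s a b + lr H k * (r h s a b + (\<Sum>s'\<in>UNIV. P h s a b s' * V s'))"
    using Q_step[OF k h] by (simp add: V_def)
  ultimately show ?thesis
    using prev[of s a b] backup by (auto intro: convex_bound_le)
qed

lemma Q_range: "h \<in> {1..H+1} \<Longrightarrow> 0 \<le> Q k h s a b \<and> Q k h s a b \<le> real H - real h + 1"
proof (induction k arbitrary: h s a b)
  case 0
  show ?case
  proof (cases "h = H + 1")
    case False
    then have "h \<in> {1..H}" using "0" by simp
    then show ?thesis using Q_init by simp
  qed (simp add: Q_Suc_H)
next
  case (Suc k)
  have "h \<le> H + 1" using Suc.prems by simp
  then have "\<forall>s a b. 0 \<le> Q (Suc k) h s a b \<and> Q (Suc k) h s a b \<le> real H - real h + 1"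
  proof (induction h rule: inc_induct)
    case (step j)
    then have j: "j \<in> {1..H}" using Suc.prems by simp
    show ?case
    proof (intro allI)
      fix s a b
      show "0 \<le> Q (Suc k) j s a b \<and> Q (Suc k) j s a b \<le> real H - real j + 1"
      proof (rule Q_step_range[OF j])
        show "0 \<le> Q (Suc k - 1) j s' a' b' \<and> Q (Suc k - 1) j s' a' b' \<le> real H - real j + 1" for s' a' b'
          using Suc.IH[of j s' a' b'] j by simp
        show "0 \<le> Q (Suc k) (j + 1) s' a' b' \<and> Q (Suc k) (j + 1) s' a' b' \<le> real H - real j" for s' a' b'
          using step.IH by simp
      qed simp
    qed
  qed (simp add: Q_Suc_H)
  then show ?case by blast
qed

lemma Q_abs_le_H: "h \<in> {1..H} \<Longrightarrow> \<bar>Q k h s a b\<bar> \<le> real H"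
  using Q_range[of h k s a b] by auto

lemma reg_mu_le:
  assumes w: "nondecreasing_prob_weights w k" and k: "1 \<le> k" and h: "h \<in> {1..H}"
  shows "reg_mu w Q mu nu k h s \<le> w k / \<eta> + \<eta> * (real (card (UNIV :: 'a set)) * (real H)^2) / 2"
proof -
  define g where "g t a = (\<Sum>b\<in>UNIV. nu t h s b * Q t h s a b)" for t a
  let ?bound = "w k / \<eta> + \<eta> * (real (card (UNIV :: 'a set)) * (real H)^2) / 2"
  have grad: "(\<Sum>a\<in>UNIV. (g t a)^2) \<le> real (card (UNIV :: 'a set)) * (real H)^2" for t
    unfolding g_def by (rule sum_square_average_le[OF nu_in_simplex[OF h]]) (rule Q_abs_le_H[OF h])
  have "(\<Sum>t=1..k. w t * ip (Q t h s) z (nu t h s)) \<le> ?bound + (\<Sum>t=1..k. w t * ip (Q t h s) (mu t h s) (nu t h s))"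
    if z: "z \<in> simplex" for z
  proof -
    have "(\<Sum>t=1..k. w t * ip (Q t h s) z (nu t h s)) - (\<Sum>t=1..k. w t * ip (Q t h s) (mu t h s) (nu t h s))
        = (\<Sum>t=1..k. w t * (\<Sum>a\<in>UNIV. g t a * (z a - mu t h s a)))"
      by (simp add: sum_subtractf[symmetric] right_diff_distrib[symmetric] ip_diff_left g_def)
    also have "\<dots> \<le> ?bound"
      using h by (intro projected_gradient_regret[OF eta w k mu_in_simplex _ grad z]) (simp_all add: mu_step g_def)
    finally show ?thesis by linarith
  qed
  then have "(SUP z\<in>simplex. \<Sum>t=1..k. w t * ip (Q t h s) z (nu t h s)) \<le> ?bound + (\<Sum>t=1..k. w t * ip (Q t h s) (mu t h s) (nu t h s))"
    using uniform_in_simplex by (intro cSUP_least) auto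
  then show ?thesis
    unfolding reg_mu_def by linarith
qed

lemma reg_nu_le:
  assumes w: "nondecreasing_prob_weights w k" and k: "1 \<le> k" and h: "h \<in> {1..H}"
  shows "reg_nu w Q mu nu k h s \<le> w k / \<eta> + \<eta> * (real (card (UNIV :: 'b set)) * (real H)^2) / 2"
proof -
  \<comment> \<open>the min-player performs projected gradient ascent on the negated payoff\<close>
  define g where "g t b = - (\<Sum>a\<in>UNIV. mu t h s a * Q t h s a b)" for t b
  let ?bound = "w k / \<eta> + \<eta> * (real (card (UNIV :: 'b set)) * (real H)^2) / 2"
  have grad: "(\<Sum>b\<in>UNIV. (g t b)^2) \<le> real (card (UNIV :: 'b set)) * (real H)^2" for t
    unfolding g_def power2_minus
    by (rule sum_square_average_le[OF mu_in_simplex[OF h]]) (rule Q_abs_le_H[OF h])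
  have "(\<Sum>t=1..k. w t * ip (Q t h s) (mu t h s) (nu t h s)) - ?bound \<le> (\<Sum>t=1..k. w t * ip (Q t h s) (mu t h s) z)"
    if z: "z \<in> simplex" for z
  proof -
    have "(\<Sum>t=1..k. w t * ip (Q t h s) (mu t h s) (nu t h s)) - (\<Sum>t=1..k. w t * ip (Q t h s) (mu t h s) z)
        = (\<Sum>t=1..k. w t * (\<Sum>b\<in>UNIV. g t b * (z b - nu t h s b)))"
      by (simp only: sum_subtractf[symmetric] right_diff_distrib[symmetric] ip_diff_right g_def)
    also have "\<dots> \<le> ?bound"
      using h by (intro projected_gradient_regret[OF eta w k nu_in_simplex _ grad z]) (simp_all add: nu_step g_def)
    finally show ?thesis by linarith
  qed
  then have "(\<Sum>t=1..k. w t * ip (Q t h s) (mu t h s) (nu t h s)) - ?bound \<le> (INF z\<in>simplex. \<Sum>t=1..k. w t * ip (Q t h s) (mu t h s) z)"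
    using uniform_in_simplex by (intro cINF_greatest) auto
  then show ?thesis
    unfolding reg_nu_def by linarith
qed

lemma reg_le:
  assumes k: "1 \<le> k" and h: "h \<in> {1..H}"
  shows "reg H Q mu nu k h \<le> 2 / \<eta> * ((real H + 1) / (real H + real k))
    + \<eta> * real (max (card (UNIV :: 'a set)) (card (UNIV :: 'b set))) * (real H)^2 / 2"
proof -
  let ?bound = "2 / \<eta> * ((real H + 1) / (real H + real k))
    + \<eta> * real (max (card (UNIV :: 'a set)) (card (UNIV :: 'b set))) * (real H)^2 / 2"
  have w: "nondecreasing_prob_weights (lrw H k) k"
    by (rule nondecreasing_prob_weights_lrw[OF H k])
  have "lrw H k k = lr H k"
    by (simp add: lrw_def)
  moreover have "lr H k / \<eta> \<le> 2 / \<eta> * lr H k"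
    using eta lr_pos[OF H, of k] by (simp add: divide_right_mono)
  ultimately have "lrw H k k / \<eta> \<le> 2 / \<eta> * ((real H + 1) / (real H + real k))"
    by (simp add: lr_def)
  moreover have card_le: "\<eta> * (real n * (real H)^2) / 2
      \<le> \<eta> * real (max (card (UNIV :: 'a set)) (card (UNIV :: 'b set))) * (real H)^2 / 2"
    if "n \<le> max (card (UNIV :: 'a set)) (card (UNIV :: 'b set))" for n
    using that eta by (simp add: mult_left_mono mult_right_mono)
  ultimately have "reg_mu (lrw H k) Q mu nu k h s \<le> ?bound" "reg_nu (lrw H k) Q mu nu k h s \<le> ?bound" for s
    using reg_mu_le[OF w k h, of s] reg_nu_le[OF w k h, of s]
      card_le[OF max.cobounded1] card_le[OF max.cobounded2] by linarith+
  then show ?thesis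
    by (simp add: reg_def)
qed

lemma reg_bar_uniform_le:
  assumes k: "1 \<le> k" and h: "h \<in> {1..H}"
  shows "reg_bar (\<lambda>t. 1 / real k) Q mu nu k h \<le> 4 / (\<eta> * real k)
    + \<eta> * (real (card (UNIV :: 'a set)) + real (card (UNIV :: 'b set))) * (real H)^2 / 2"
proof -
  have w: "nondecreasing_prob_weights (\<lambda>t. 1 / real k) k"
    by (rule nondecreasing_prob_weights_uniform[OF k])
  define c where "c = 1 / (\<eta> * real k)"
  have "0 \<le> c" "1 / real k / \<eta> = c" "4 / (\<eta> * real k) = 4 * c"
    using eta by (simp_all add: c_def)
  moreover have "\<eta> * (real (card (UNIV :: 'a set)) + real (card (UNIV :: 'b set))) * (real H)^2 / 2
      = \<eta> * (real (card (UNIV :: 'a set)) * (real H)^2) / 2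
        + \<eta> * (real (card (UNIV :: 'b set)) * (real H)^2) / 2"
    by (simp add: algebra_simps)
  ultimately have "reg_mu (\<lambda>t. 1 / real k) Q mu nu k h s + reg_nu (\<lambda>t. 1 / real k) Q mu nu k h s
      \<le> 4 / (\<eta> * real k)
        + \<eta> * (real (card (UNIV :: 'a set)) + real (card (UNIV :: 'b set))) * (real H)^2 / 2" for s
    using reg_mu_le[OF w k h, of s] reg_nu_le[OF w k h, of s] by linarith
  then show ?thesis
    by (simp add: reg_bar_def)
qed

end

theorem mainTheorem10:
  fixes H :: nat and \<eta> :: real
    and r :: "nat \<Rightarrow> 's::finite \<Rightarrow> 'a::finite \<Rightarrow> 'b::finite \<Rightarrow> real"
    and P :: "nat \<Rightarrow> 's \<Rightarrow> 'a \<Rightarrow> 'b \<Rightarrow> 's \<Rightarrow> real"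
    and Q :: "nat \<Rightarrow> nat \<Rightarrow> 's \<Rightarrow> 'a \<Rightarrow> 'b \<Rightarrow> real"
    and mu :: "nat \<Rightarrow> nat \<Rightarrow> 's \<Rightarrow> 'a \<Rightarrow> real"
    and nu :: "nat \<Rightarrow> nat \<Rightarrow> 's \<Rightarrow> 'b \<Rightarrow> real"
  assumes H: "H \<ge> 1"
    and eta: "\<eta> > 0"
    and r_range: "\<And>h s a b. h \<in> {1..H} \<Longrightarrow> 0 \<le> r h s a b \<and> r h s a b \<le> 1"
    and P_nonneg: "\<And>h s a b s'. h \<in> {1..H} \<Longrightarrow> 0 \<le> P h s a b s'"
    and P_sum: "\<And>h s a b. h \<in> {1..H} \<Longrightarrow> (\<Sum>s'\<in>UNIV. P h s a b s') = 1"
    and Q_last: "\<And>k s a b. Q k (H+1) s a b = 0"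
    and Q_init: "\<And>h s a b. h \<in> {1..H} \<Longrightarrow> Q 0 h s a b = real H - real h + 1"
    and Q_step: "\<And>k h s a b. k \<ge> 1 \<Longrightarrow> h \<in> {1..H} \<Longrightarrow>
        Q k h s a b = (1 - lr H k) * Q (k-1) h s a b
          + lr H k * (r h s a b + (\<Sum>s'\<in>UNIV. P h s a b s' *
                 ip (Q k (h+1) s') (mu k (h+1) s') (nu k (h+1) s')))"
    and mu_init: "\<And>h s a. h \<in> {1..H} \<Longrightarrow> mu 0 h s a = 1 / real (card (UNIV :: 'a set))"
    and nu_init: "\<And>h s b. h \<in> {1..H} \<Longrightarrow> nu 0 h s b = 1 / real (card (UNIV :: 'b set))"
    and mu_step: "\<And>k h s. k \<ge> 1 \<Longrightarrow> h \<in> {1..H} \<Longrightarrow>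
        mu k h s = proj_simplex (\<lambda>a. mu (k-1) h s a
                     + \<eta> * (\<Sum>b\<in>UNIV. nu (k-1) h s b * Q (k-1) h s a b))"
    and nu_step: "\<And>k h s. k \<ge> 1 \<Longrightarrow> h \<in> {1..H} \<Longrightarrow>
        nu k h s = proj_simplex (\<lambda>b. nu (k-1) h s b
                     - \<eta> * (\<Sum>a\<in>UNIV. mu (k-1) h s a * Q (k-1) h s a b))"
  shows "\<forall>k\<ge>1. \<forall>h\<in>{1..H}.
     reg H Q mu nu k h \<le> 2 / \<eta> * ((real H + 1) / (real H + real k))
        + \<eta> * real (max (card (UNIV :: 'a set)) (card (UNIV :: 'b set))) * (real H)^2 / 2
   \<and> reg_bar (\<lambda>t. 1 / real k) Q mu nu k h \<le> 4 / (\<eta> * real k)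
        + \<eta> * (real (card (UNIV :: 'a set)) + real (card (UNIV :: 'b set))) * (real H)^2 / 2"
proof -
  interpret gda_markov_game H \<eta> r P Q mu nu
    by unfold_locales (fact assms)+
  show ?thesis
    using reg_le reg_bar_uniform_le by blast
qed

end
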